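(* Let $m,n,p\in\mathbb N^+$, let $G=(V,E)$ be a graph, and let $A,B\subseteq V$ be disjoint such that $|N(u)\cap B|\ge p$ for every $u\in A$. If $|A|>(m-1)(n-1)^p$, then (i) there are $m$ vertices $u_1,\ldots,u_m\in A$ and $p$ vertices $v_1,\ldots,v_p\in B$ with $\{u_i,v_j\}\in E$ for all $i\in[m]$, $j\in[p]$, or (ii) there are $n$ vertices $u_1,\ldots,u_n\in A$ and $n$ vertices $v_1,\ldots,v_n\in B$ such that for all $i,j\in[n]$, $\{u_i,v_j\}\in E$ if and only if $i=j$.
   Context: All graphs are simple. $N(u)$ denotes the set of neighbors of $u$ in $G$. $[n]=\{1,\dots,n\}$. *)

theory Defs
  imports Main
begin

definition simple_graph :: "'a set \<Rightarrow> ('a \<Rightarrow> 'a \<Rightarrow> bool) \<Rightarrow> bool" where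
  "simple_graph V E \<longleftrightarrow> finite V \<and> (\<forall>u v. E u v \<longrightarrow> u \<in> V \<and> v \<in> V)
     \<and> (\<forall>u v. E u v \<longrightarrow> E v u) \<and> (\<forall>u. \<not> E u u)"

definition nbhd :: "('a \<Rightarrow> 'a \<Rightarrow> bool) \<Rightarrow> 'a \<Rightarrow> 'a set" where
  "nbhd E u = {v. E u v}"

end

theory Submission
  imports Defs
begin

(* The statement follows from the stronger claim
     if every u in A has at least p neighbours in B and |A| > (m-1) k^p,
     then A,B contain a K_{m,p} or an induced matching of size k+1,
   proved by induction on p.  For p = 0 the m vertices of A form K_{m,0}.
   For p+1: if some v in B has more than (m-1) k^p neighbours in A, apply the
   induction hypothesis to (vertices of A related to v, B - {v}); a K_{m,p} found there extends by
   v to a K_{m,p+1}.  Otherwise every v in B has at most D = (m-1) k^p neighbours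
   in A while |A| > k D, and a greedy argument yields an induced matching of size
   k+1: take u in A of minimum degree into B and a neighbour v of u, delete the
   neighbours of v from A and of u from B, and recurse; minimality of u
   guarantees that every remaining vertex of A keeps a neighbour in B.
   Nothing uses symmetry or irreflexivity of E, so all lemmas are stated for an
   arbitrary relation E between finite sets A and B. *)

definition has_biclique ::
    "('a \<Rightarrow> 'a \<Rightarrow> bool) \<Rightarrow> 'a set \<Rightarrow> 'a set \<Rightarrow> nat \<Rightarrow> nat \<Rightarrow> bool" where
  "has_biclique E A B m p \<longleftrightarrow> (\<exists>us vs. inj_on us {1..m} \<and> us ` {1..m} \<subseteq> A \<and>
     inj_on vs {1..p} \<and> vs ` {1..p} \<subseteq> B \<and>
     (\<forall>i\<in>{1..m}. \<forall>j\<in>{1..p}. E (us i) (vs j)))"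

definition has_induced_matching ::
    "('a \<Rightarrow> 'a \<Rightarrow> bool) \<Rightarrow> 'a set \<Rightarrow> 'a set \<Rightarrow> nat \<Rightarrow> bool" where
  "has_induced_matching E A B n \<longleftrightarrow> (\<exists>us vs. inj_on us {1..n} \<and> us ` {1..n} \<subseteq> A \<and>
     inj_on vs {1..n} \<and> vs ` {1..n} \<subseteq> B \<and>
     (\<forall>i\<in>{1..n}. \<forall>j\<in>{1..n}. E (us i) (vs j) \<longleftrightarrow> i = j))"

lemma has_biclique_mono:
  "has_biclique E A B m p \<Longrightarrow> A \<subseteq> A' \<Longrightarrow> B \<subseteq> B' \<Longrightarrow> has_biclique E A' B' m p"
  unfolding has_biclique_def by (elim exE conjE, intro exI conjI) (assumption | erule (1) subset_trans)+

lemma has_induced_matching_mono: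
  "has_induced_matching E A B n \<Longrightarrow> A \<subseteq> A' \<Longrightarrow> B \<subseteq> B'
   \<Longrightarrow> has_induced_matching E A' B' n"
  unfolding has_induced_matching_def by (elim exE conjE, intro exI conjI) (assumption | erule (1) subset_trans)+

lemma extend_enumeration:
  assumes "inj_on f {1..k}" and "f ` {1..k} \<subseteq> X" and "x \<notin> X"
  shows "inj_on (f(Suc k := x)) {1..Suc k}"
    and "(f(Suc k := x)) ` {1..Suc k} = insert x (f ` {1..k})"
proof -
  have dom: "{1..Suc k} = insert (Suc k) {1..k}" by auto
  have same: "(f(Suc k := x)) ` {1..k} = f ` {1..k}" by (rule image_cong) auto
  have "inj_on (f(Suc k := x)) {1..k}"
    using assms(1) by (rule inj_on_cong[THEN iffD2, rotated]) auto
  then show "inj_on (f(Suc k := x)) {1..Suc k}"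
    unfolding dom using same assms(2,3) by auto
  show "(f(Suc k := x)) ` {1..Suc k} = insert x (f ` {1..k})"
    unfolding dom image_insert same by simp
qed

lemma has_biclique_empty_side:
  assumes "finite A" and "m \<le> card A"
  shows "has_biclique E A B m 0"
proof -
  obtain C where C: "C \<subseteq> A" "card C = m"
    using obtain_subset_with_card_n[OF assms(2)] by metis
  then have "finite C" using assms(1) finite_subset by blast
  then obtain h where "bij_betw h {1..card C} C" using ex_bij_betw_nat_finite_1 by blast
  then show ?thesis unfolding has_biclique_def using C by (auto simp: bij_betw_def)
qed

lemma has_biclique_extend:
  assumes "has_biclique E A (B - {v}) m q" and "v \<in> B" and "\<forall>u\<in>A. E u v"
  shows "has_biclique E A B m (Suc q)"
proof -
  obtain us vs where us: "inj_on us {1..m}" "us ` {1..m} \<subseteq> A"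
    and vs: "inj_on vs {1..q}" "vs ` {1..q} \<subseteq> B - {v}"
    and rel: "\<forall>i\<in>{1..m}. \<forall>j\<in>{1..q}. E (us i) (vs j)"
    using assms(1) unfolding has_biclique_def by (elim exE conjE) (rule that)
  have "v \<notin> B - {v}" by simp
  note vs' = extend_enumeration[OF vs this]
  have rel': "E (us i) ((vs(Suc q := v)) j)" if "i \<in> {1..m}" and "j \<in> {1..Suc q}" for i j
  proof (cases "j = Suc q")
    case True
    have "us i \<in> A" using us(2) that(1) by blast
    then show ?thesis using True assms(3) by simp
  next
    case False
    then show ?thesis using rel that by simp
  qed
  have "(vs(Suc q := v)) ` {1..Suc q} \<subseteq> B"
    unfolding vs'(2) using vs(2) assms(2) by blast
  then show ?thesis
    unfolding has_biclique_def using us vs'(1) rel'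
    by (intro exI[of _ us] exI[of _ "vs(Suc q := v)"]) simp
qed

lemma has_induced_matching_one:
  "E u v \<Longrightarrow> u \<in> A \<Longrightarrow> v \<in> B \<Longrightarrow> has_induced_matching E A B 1"
  unfolding has_induced_matching_def
  by (rule exI[of _ "\<lambda>_. u"], rule exI[of _ "\<lambda>_. v"]) simp

lemma has_induced_matching_extend:
  assumes "has_induced_matching E A' B' k"
    and "A' \<subseteq> A" "B' \<subseteq> B" "u \<in> A - A'" "v \<in> B - B'"
    and "E u v" "\<forall>y\<in>B'. \<not> E u y" "\<forall>x\<in>A'. \<not> E x v"
  shows "has_induced_matching E A B (Suc k)"
proof -
  obtain us vs where us: "inj_on us {1..k}" "us ` {1..k} \<subseteq> A'"
    and vs: "inj_on vs {1..k}" "vs ` {1..k} \<subseteq> B'"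
    and rel: "\<forall>i\<in>{1..k}. \<forall>j\<in>{1..k}. E (us i) (vs j) \<longleftrightarrow> i = j"
    using assms(1) unfolding has_induced_matching_def by (elim exE conjE) (rule that)
  note us' = extend_enumeration[OF us, of u] and vs' = extend_enumeration[OF vs, of v]
  have "(us(Suc k := u)) ` {1..Suc k} \<subseteq> A" "(vs(Suc k := v)) ` {1..Suc k} \<subseteq> B"
    using us'(2) vs'(2) us(2) vs(2) assms(2-5) by auto
  moreover have "E ((us(Suc k := u)) i) ((vs(Suc k := v)) j) \<longleftrightarrow> i = j"
    if "i \<in> {1..Suc k}" and "j \<in> {1..Suc k}" for i j
  proof (cases "i = Suc k"; cases "j = Suc k")
    assume "i \<noteq> Suc k" "j \<noteq> Suc k"
    then show ?thesis using rel that by simp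
  next
    assume "i \<noteq> Suc k" "j = Suc k"
    then have "us i \<in> A'" using us(2) that(1) by auto
    then show ?thesis using assms(8) \<open>i \<noteq> Suc k\<close> \<open>j = Suc k\<close> by simp
  next
    assume "i = Suc k" "j \<noteq> Suc k"
    then have "vs j \<in> B'" using vs(2) that(2) by auto
    then show ?thesis using assms(7) \<open>i = Suc k\<close> \<open>j \<noteq> Suc k\<close> by simp
  qed (simp add: assms(6))
  ultimately show ?thesis
    unfolding has_induced_matching_def using us'(1) vs'(1) assms(4,5) by blast
qed

lemma min_degree_keeps_neighbour:
  assumes "finite B" and "u1 \<in> A" and "v1 \<in> nbhd E u1 \<inter> B"
    and min: "\<And>u. u \<in> A \<Longrightarrow> card (nbhd E u1 \<inter> B) \<le> card (nbhd E u \<inter> B)"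
    and "u \<in> A" and "\<not> E u v1"
  shows "nbhd E u \<inter> (B - nbhd E u1) \<noteq> {}"
proof
  assume "nbhd E u \<inter> (B - nbhd E u1) = {}"
  then have sub: "nbhd E u \<inter> B \<subseteq> nbhd E u1 \<inter> B" by blast
  moreover have "card (nbhd E u1 \<inter> B) \<le> card (nbhd E u \<inter> B)" using min assms(5) .
  ultimately have "nbhd E u \<inter> B = nbhd E u1 \<inter> B"
    using assms(1) by (intro card_seteq) auto
  then show False using assms(3,6) by (auto simp: nbhd_def)
qed

lemma induced_matching_from_degrees:
  assumes "finite A" and "finite B"
    and "\<forall>u\<in>A. nbhd E u \<inter> B \<noteq> {}"
    and "\<forall>v\<in>B. card {u\<in>A. E u v} \<le> X"
    and "k * X < card A"
  shows "has_induced_matching E A B (Suc k)"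
  using assms
proof (induction k arbitrary: A B)
  case 0
  then obtain u where u: "u \<in> A" by fastforce
  then obtain v where "v \<in> nbhd E u \<inter> B" using "0.prems"(3) by blast
  then show ?case using has_induced_matching_one[of E u v] u by (simp add: nbhd_def)
next
  case (Suc k)
  have "A \<noteq> {}" using Suc.prems(5) by auto
  then obtain u1 where u1: "u1 \<in> A"
    and min: "\<And>u. u \<in> A \<Longrightarrow> card (nbhd E u1 \<inter> B) \<le> card (nbhd E u \<inter> B)"
    using ex_has_least_nat[of "\<lambda>u. u \<in> A" _ "\<lambda>u. card (nbhd E u \<inter> B)"] by blast
  obtain v1 where v1: "v1 \<in> nbhd E u1 \<inter> B" using Suc.prems(3) u1 by blast
  define A' where "A' = {u\<in>A. \<not> E u v1}"
  define B' where "B' = B - nbhd E u1"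
  have "\<forall>u\<in>A'. nbhd E u \<inter> B' \<noteq> {}"
    unfolding A'_def B'_def
    using min_degree_keeps_neighbour[OF Suc.prems(2) u1 v1 min] by blast
  moreover have "\<forall>v\<in>B'. card {u\<in>A'. E u v} \<le> X"
  proof
    fix v assume "v \<in> B'"
    then have "card {u\<in>A. E u v} \<le> X" using Suc.prems(4) by (simp add: B'_def)
    moreover have "card {u\<in>A'. E u v} \<le> card {u\<in>A. E u v}"
      using Suc.prems(1) by (intro card_mono) (auto simp: A'_def)
    ultimately show "card {u\<in>A'. E u v} \<le> X" by simp
  qed
  moreover have "k * X < card A'"
  proof -
    have "A = A' \<union> {u\<in>A. E u v1}" by (auto simp: A'_def)
    then have "card A \<le> card A' + card {u\<in>A. E u v1}" by (metis card_Un_le)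
    moreover have "card {u\<in>A. E u v1} \<le> X" using Suc.prems(4) v1 by blast
    ultimately show ?thesis using Suc.prems(5) by simp
  qed
  ultimately have "has_induced_matching E A' B' (Suc k)"
    using Suc.IH[of A' B'] Suc.prems(1,2) by (simp add: A'_def B'_def)
  then show ?case
    by (rule has_induced_matching_extend) (use u1 v1 in \<open>auto simp: A'_def B'_def nbhd_def\<close>)
qed

lemma biclique_or_induced_matching:
  assumes "finite A" and "finite B" and "m \<ge> 1"
    and "\<forall>u\<in>A. p \<le> card (nbhd E u \<inter> B)"
    and "(m - 1) * k ^ p < card A"
  shows "has_biclique E A B m p \<or> has_induced_matching E A B (Suc k)"
  using assms(1,2,4,5)
proof (induction p arbitrary: A B)
  case 0
  then have "m \<le> card A" using assms(3) by simp
  then show ?case using has_biclique_empty_side "0.prems"(1) by blast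
next
  case (Suc q)
  define D where "D = (m - 1) * k ^ q"
  show ?case
  proof (cases "\<exists>v\<in>B. D < card {u\<in>A. E u v}")
    case True
    then obtain v where v: "v \<in> B" "D < card {u\<in>A. E u v}" by blast
    let ?Av = "{u\<in>A. E u v}"
    have "\<forall>u\<in>?Av. q \<le> card (nbhd E u \<inter> (B - {v}))"
    proof
      fix u assume "u \<in> ?Av"
      then have "Suc q \<le> card (nbhd E u \<inter> B)" using Suc.prems(3) by blast
      moreover have "nbhd E u \<inter> (B - {v}) = (nbhd E u \<inter> B) - {v}" by blast
      ultimately show "q \<le> card (nbhd E u \<inter> (B - {v}))"
        using diff_card_le_card_Diff[of "{v}" "nbhd E u \<inter> B"] by simp
    qed
    then have "has_biclique E ?Av (B - {v}) m q \<or> has_induced_matching E ?Av (B - {v}) (Suc k)"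
      using Suc.IH Suc.prems(1,2) v(2) by (simp add: D_def)
    then show ?thesis
    proof
      assume "has_biclique E ?Av (B - {v}) m q"
      then have "has_biclique E ?Av B m (Suc q)" using v(1) by (rule has_biclique_extend) simp
      then show ?thesis using has_biclique_mono by blast
    next
      assume "has_induced_matching E ?Av (B - {v}) (Suc k)"
      then show ?thesis using has_induced_matching_mono by blast
    qed
  next
    case False
    have "\<forall>u\<in>A. nbhd E u \<inter> B \<noteq> {}" using Suc.prems(3) by force
    moreover have "k * D < card A" using Suc.prems(4) by (simp add: D_def ac_simps)
    ultimately show ?thesis
      using induced_matching_from_degrees[OF Suc.prems(1,2)] False by (simp add: not_less)
  qed
qed

theorem lemma3p14:
  fixes V :: "'a set" and E :: "'a \<Rightarrow> 'a \<Rightarrow> bool" and A B :: "'a set"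
    and m n p :: nat
  assumes "m \<ge> 1" and "n \<ge> 1" and "p \<ge> 1"
    and "simple_graph V E"
    and "A \<subseteq> V" and "B \<subseteq> V" and "A \<inter> B = {}"
    and "\<forall>u\<in>A. card (nbhd E u \<inter> B) \<ge> p"
    and "card A > (m - 1) * (n - 1) ^ p"
  shows "(\<exists>us vs. inj_on us {1..m} \<and> us ` {1..m} \<subseteq> A \<and>
                 inj_on vs {1..p} \<and> vs ` {1..p} \<subseteq> B \<and>
                 (\<forall>i\<in>{1..m}. \<forall>j\<in>{1..p}. E (us i) (vs j)))
       \<or> (\<exists>us vs. inj_on us {1..n} \<and> us ` {1..n} \<subseteq> A \<and>
                 inj_on vs {1..n} \<and> vs ` {1..n} \<subseteq> B \<and>
                 (\<forall>i\<in>{1..n}. \<forall>j\<in>{1..n}. E (us i) (vs j) \<longleftrightarrow> i = j))"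
proof -
  have "finite A" "finite B"
    using assms(4-6) finite_subset unfolding simple_graph_def by blast+
  then have "has_biclique E A B m p \<or> has_induced_matching E A B (Suc (n - 1))"
    using biclique_or_induced_matching assms(1,8,9) by blast
  then show ?thesis
    using assms(2) unfolding has_biclique_def has_induced_matching_def by simp
qed

end
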